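(* Let $E$ be a nonzero real Banach space, $S\colon E\rightrightarrows E^*$ be closed, monotone and quasidense, and suppose $R(S^{\mathbb F})\subset\widehat E:=\{\widehat x:x\in E\}$. Then $G(S^{\mathbb F})=\{(x^*,\widehat x):(x,x^* )\in G(S)\}$.
   Context: $\widehat x\in E^{**}$ is the canonical image of $x$ ($\langle x^*,\widehat x\rangle=\langle x,x^*\rangle$). For a multifunction $S\colon E\rightrightarrows E^*$ with nonempty graph $G(S)$: closed means $G(S)$ norm-closed; monotone means $\langle s-t,s^*-t^*\rangle\ge0$ on $G(S)$; quasidense means for every $(x,x^* )$, $\inf_{(s,s^* )\in G(S)}[\tfrac12\|s-x\|^2+\tfrac12\|s^*-x^*\|^2+\langle s-x,s^*-x^*\rangle]\le0$. Let $\varphi_S(x,x^* )=\sup_{(s,s^* )\in G(S)}[\langle s,x^*\rangle+\langle x,s^*\rangle-\langle s,s^*\rangle]$ and $\varphi_S^*$ its conjugate on $E^*\times E^{**}$ under $\langle (x,x^* ),(y^*,y^{**})\rangle=\langle x,y^*\rangle+\langle x^*,y^{**}\rangle$. For $S$ closed, monotone, quasidense, the Fitzpatrick extension $S^{\mathbb F}\colon E^*\rightrightarrows E^{**}$ is given by $(y^*,y^{**})\in G(S^{\mathbb F})$ iff $\varphi_S^*(y^*,y^{**})=\langle y^*,y^{**}\rangle$; $R(S^{\mathbb F})$ is its range. *)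

theory Defs
  imports "HOL-Analysis.Analysis"
begin

(* E: type 'a::banach; E* = 'a =>L real; E** = (E* =>L real); S given by its graph G. *)

definition canon :: "'a::real_normed_vector \<Rightarrow> (('a \<Rightarrow>\<^sub>L real) \<Rightarrow>\<^sub>L real)" where
  "canon x = Blinfun (\<lambda>f. blinfun_apply f x)"

definition monotone_graph :: "('a::real_normed_vector \<times> ('a \<Rightarrow>\<^sub>L real)) set \<Rightarrow> bool" where
  "monotone_graph G \<longleftrightarrow>
     (\<forall>(s, s') \<in> G. \<forall>(t, t') \<in> G. blinfun_apply (s' - t') (s - t) \<ge> 0)"

definition quasidense :: "('a::real_normed_vector \<times> ('a \<Rightarrow>\<^sub>L real)) set \<Rightarrow> bool" where
  "quasidense G \<longleftrightarrow>
     (\<forall>x x'. (INF p\<in>G. (1/2) * (norm (fst p - x))\<^sup>2 + (1/2) * (norm (snd p - x'))\<^sup>2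
                       + blinfun_apply (snd p - x') (fst p - x)) \<le> (0::real))"

definition fitz :: "('a::real_normed_vector \<times> ('a \<Rightarrow>\<^sub>L real)) set
                     \<Rightarrow> 'a \<Rightarrow> ('a \<Rightarrow>\<^sub>L real) \<Rightarrow> ereal" where
  "fitz G x x' = (SUP p\<in>G. ereal (blinfun_apply x' (fst p) + blinfun_apply (snd p) x
                                   - blinfun_apply (snd p) (fst p)))"

definition fitz_conj :: "('a::real_normed_vector \<times> ('a \<Rightarrow>\<^sub>L real)) set
                     \<Rightarrow> ('a \<Rightarrow>\<^sub>L real) \<Rightarrow> (('a \<Rightarrow>\<^sub>L real) \<Rightarrow>\<^sub>L real) \<Rightarrow> ereal" where
  "fitz_conj G y' y'' = (SUP (x, x') \<in> (UNIV :: ('a \<times> ('a \<Rightarrow>\<^sub>L real)) set).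
       ereal (blinfun_apply y' x + blinfun_apply y'' x') - fitz G x x')"

definition fitz_ext :: "('a::real_normed_vector \<times> ('a \<Rightarrow>\<^sub>L real)) set
                     \<Rightarrow> (('a \<Rightarrow>\<^sub>L real) \<times> (('a \<Rightarrow>\<^sub>L real) \<Rightarrow>\<^sub>L real)) set" where
  "fitz_ext G = {(y', y''). fitz_conj G y' y'' = ereal (blinfun_apply y'' y')}"

end

theory Submission
  imports Defs
begin

text \<open>
  For (s, s') in G, monotonicity gives phi_S(s, s') = <s, s'>, while every (t, t') in G yields
  phi_S(z, z') >= <z, t'> + <t, z'> - <t, t'>; together these give phi_S*(s', canon s) = <s, s'>,
  so G embeds into the graph of the Fitzpatrick extension. Conversely, if (y', canon x) lies in
  that graph, testing the supremum defining phi_S* at the points of G shows that (x, y') is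
  monotonically related to G. For such a point the quasidensity infimum has nonnegative cross
  terms, so it forces points of G arbitrarily close to (x, y'), and closedness puts (x, y') into G.
\<close>

definition monotonically_related ::
    "('a::real_normed_vector \<times> ('a \<Rightarrow>\<^sub>L real)) set \<Rightarrow> 'a \<Rightarrow> ('a \<Rightarrow>\<^sub>L real) \<Rightarrow> bool" where
  "monotonically_related G x x' \<longleftrightarrow> (\<forall>(s, s') \<in> G. blinfun_apply (s' - x') (s - x) \<ge> 0)"

lemma canon_apply [simp]: "blinfun_apply (canon x) f = blinfun_apply f x"
  unfolding canon_def by (simp add: bounded_linear_Blinfun_apply blinfun.bounded_linear_left)

lemma fitz_ge:
  assumes "(t, t') \<in> G"
  shows "ereal (blinfun_apply z' t + blinfun_apply t' z - blinfun_apply t' t) \<le> fitz G z z'"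
  unfolding fitz_def using assms by (metis (no_types, lifting) SUP_upper fst_conv snd_conv)

lemma fitz_on_graph:
  assumes mono: "monotone_graph G" and sG: "(s, s') \<in> G"
  shows "fitz G s s' = ereal (blinfun_apply s' s)"
proof (rule antisym)
  show "fitz G s s' \<le> ereal (blinfun_apply s' s)"
    unfolding fitz_def
  proof (rule SUP_least)
    fix p assume "p \<in> G"
    then have "blinfun_apply (s' - snd p) (s - fst p) \<ge> 0"
      using mono sG unfolding monotone_graph_def by (cases p) fastforce
    then show "ereal (blinfun_apply s' (fst p) + blinfun_apply (snd p) s
        - blinfun_apply (snd p) (fst p)) \<le> ereal (blinfun_apply s' s)"
      by (simp add: blinfun.diff_left blinfun.diff_right)
  qed
  show "ereal (blinfun_apply s' s) \<le> fitz G s s'"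
    using fitz_ge[OF sG, of s' s] by simp
qed

lemma fitz_conj_ge:
  "ereal (blinfun_apply y' z + blinfun_apply y'' z') - fitz G z z' \<le> fitz_conj G y' y''"
  unfolding fitz_conj_def by (rule SUP_upper2[where i="(z, z')"]) auto

lemma fitz_conj_canon_on_graph:
  assumes mono: "monotone_graph G" and xG: "(x, x') \<in> G"
  shows "fitz_conj G x' (canon x) = ereal (blinfun_apply x' x)"
proof (rule antisym)
  show "fitz_conj G x' (canon x) \<le> ereal (blinfun_apply x' x)"
    unfolding fitz_conj_def
  proof (rule SUP_least, clarify)
    fix z z'
    have "ereal (blinfun_apply z' x + blinfun_apply x' z - blinfun_apply x' x) \<le> fitz G z z'"
      by (rule fitz_ge[OF xG])
    then show "ereal (blinfun_apply x' z + blinfun_apply (canon x) z') - fitz G z z'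
        \<le> ereal (blinfun_apply x' x)"
      by (cases "fitz G z z'") auto
  qed
  show "ereal (blinfun_apply x' x) \<le> fitz_conj G x' (canon x)"
    using fitz_conj_ge[of x' x "canon x" x' G] fitz_on_graph[OF mono xG] by simp
qed

lemma monotonically_related_if_fitz_conj_canon_eq:
  assumes mono: "monotone_graph G"
    and eq: "fitz_conj G y' (canon x) = ereal (blinfun_apply y' x)"
  shows "monotonically_related G x y'"
  unfolding monotonically_related_def
proof clarify
  fix s s' assume sG: "(s, s') \<in> G"
  have "ereal (blinfun_apply y' s + blinfun_apply s' x) - fitz G s s' \<le> ereal (blinfun_apply y' x)"
    using fitz_conj_ge[of y' s "canon x" s' G] eq by simp
  then have "blinfun_apply y' s + blinfun_apply s' x - blinfun_apply s' s \<le> blinfun_apply y' x"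
    using fitz_on_graph[OF mono sG] by simp
  then show "0 \<le> blinfun_apply (s' - y') (s - x)"
    by (simp add: blinfun.diff_left blinfun.diff_right)
qed

lemma quasidense_approx_monotonically_related:
  assumes nonempty: "G \<noteq> {}" and qd: "quasidense G"
    and rel: "monotonically_related G x y'" and e: "e > 0"
  shows "\<exists>p\<in>G. dist p (x, y') < e"
proof -
  define f where "f p = (1/2) * (norm (fst p - x))\<^sup>2 + (1/2) * (norm (snd p - y'))\<^sup>2
                       + blinfun_apply (snd p - y') (fst p - x)" for p
  have f_ge: "f p \<ge> (dist p (x, y'))\<^sup>2 / 2" if "p \<in> G" for p
  proof -
    obtain a b where ab: "p = (a, b)" by (cases p)
    have "blinfun_apply (b - y') (a - x) \<ge> 0"
      using rel that ab unfolding monotonically_related_def by blast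
    then show ?thesis
      unfolding f_def ab dist_Pair_Pair by (simp add: dist_norm)
  qed
  have "(INF p\<in>G. f p) \<le> 0"
    using qd unfolding quasidense_def f_def by blast
  also have "\<dots> < e\<^sup>2 / 2"
    using e by simp
  finally have "(INF p\<in>G. f p) < e\<^sup>2 / 2" .
  moreover have "bdd_below (f ` G)"
    by (rule bdd_belowI2[of _ 0], rule order_trans[OF _ f_ge]) simp_all
  ultimately obtain p where pG: "p \<in> G" and "f p < e\<^sup>2 / 2"
    using cINF_less_iff[OF nonempty] by blast
  then have "(dist p (x, y'))\<^sup>2 < e\<^sup>2"
    using f_ge[OF pG] by simp
  then have "dist p (x, y') < e"
    using e by (simp add: power_less_imp_less_base)
  with pG show ?thesis by blast
qed

lemma closed_quasidense_mem_if_monotonically_related: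
  assumes "G \<noteq> {}" "closed G" "quasidense G" "monotonically_related G x y'"
  shows "(x, y') \<in> G"
  using closed_approachable[OF assms(2)] quasidense_approx_monotonically_related[OF assms(1,3,4)]
  by blast

theorem lemma3p2:
  fixes G :: "('a::banach \<times> ('a \<Rightarrow>\<^sub>L real)) set"
  assumes nonzero: "\<exists>x::'a. x \<noteq> 0"
    and nonempty: "G \<noteq> {}"
    and closed: "closed G"
    and mono: "monotone_graph G"
    and qd: "quasidense G"
    and range: "snd ` fitz_ext G \<subseteq> range canon"
  shows "fitz_ext G = {(x', canon x) | x x'. (x, x') \<in> G}"
proof (intro set_eqI iffI)
  fix q assume qF: "q \<in> fitz_ext G"
  obtain y' y'' where "q = (y', y'')"
    by fastforce
  moreover obtain x where "y'' = canon x"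
    using range qF \<open>q = (y', y'')\<close> by force
  ultimately have q: "q = (y', canon x)"
    by simp
  then have "fitz_conj G y' (canon x) = ereal (blinfun_apply y' x)"
    using qF unfolding fitz_ext_def by simp
  then have "(x, y') \<in> G"
    using closed_quasidense_mem_if_monotonically_related[OF nonempty closed qd]
      monotonically_related_if_fitz_conj_canon_eq[OF mono] by blast
  then show "q \<in> {(x', canon x) | x x'. (x, x') \<in> G}"
    using q by blast
next
  fix q assume "q \<in> {(x', canon x) | x x'. (x, x') \<in> G}"
  then show "q \<in> fitz_ext G"
    unfolding fitz_ext_def using fitz_conj_canon_on_graph[OF mono] by auto
qed

end
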